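(* In a strategic game in the setting described in the context, if Assumption SAV is satisfied, then for all players $i,j\in\{1,\dots,n\}$ the graphs $\mathcal{S}_{ij}$ and $\mathcal{S}_{ji}$ are congruent, i.e., $\mathcal{S}_{ij}=\{(s_i,s_j):(s_j,s_i)\in\mathcal{S}_{ji}\}$; equivalently $\Psi_{ji}(\Psi_{ij}(s_i))=s_i$ for every strategy $s_i$ of player $i$ and $\Psi_{ij}(\Psi_{ji}(s_j))=s_j$ for every strategy $s_j$ of player $j$.
   Context: Setting: there are $n\ge 2$ players and a measurable space $(\Omega,\mathcal{F})$. Each player $i$ has a prior $p_i$, an action set $A_i\subseteq\mathbb{R}$ with $|A_i|>1$, and a finite private information partition $\mathcal{I}_i$ of $\Omega$. The priors are equivalent (same null sets), and strategies agreeing up to null events are identified. A strategy of player $i$ is a $\sigma(\mathcal{I}_i)$-measurable function $s_i:\Omega\to A_i$, and player $i$ may apply any such function. For each strategy $s_i$, player $i$ has a unique conjecture $\Psi_i(s_i)$ about the tuple of strategies of the other players; $\Psi_{ij}(s_i)$ denotes its component for player $j$ (player $i$'s conjecture about player $j$'s strategy given that $i$ applies $s_i$). The graph $\mathcal{S}_{ij}$ is the set of all pairs $(s_i,\Psi_{ij}(s_i))$ with $s_i$ ranging over all strategies of player $i$. Assumption SAV (strategic certainty): for every player $i$ and every strategy $s_i$, $\Psi_i(s_i)$ equals the true tuple of strategies the other players apply in response to $s_i$. *)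

theory Defs
  imports "HOL-Probability.Probability"
begin

text \<open>Omega is the space of the measurable space M; each player i has
a prior p i (a probability measure on the same measurable space), an action set A i of reals,
and a finite information partition I i of Omega.\<close>

definition is_finite_partition :: "'w set \<Rightarrow> 'w set set \<Rightarrow> bool" where
  "is_finite_partition \<Omega> P \<longleftrightarrow> finite P \<and> {} \<notin> P \<and> \<Union>P = \<Omega> \<and>
     (\<forall>B\<in>P. \<forall>C\<in>P. B \<noteq> C \<longrightarrow> B \<inter> C = {})"

definition raw_strategies ::
  "'w measure \<Rightarrow> (nat \<Rightarrow> real set) \<Rightarrow> (nat \<Rightarrow> 'w set set) \<Rightarrow> nat \<Rightarrow> ('w \<Rightarrow> real) set" where
  "raw_strategies M A I i =
     {s. s \<in> measurable (sigma (space M) (I i)) borel \<and> (\<forall>\<omega>\<in>space M. s \<omega> \<in> A i)}"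

text \<open>Identification of strategies agreeing up to a null event (the priors are equivalent,
so the null sets of any fixed prior can be used; we use those of the prior p0).\<close>
definition strat_equiv ::
  "'w measure \<Rightarrow> 'w measure \<Rightarrow> (nat \<Rightarrow> real set) \<Rightarrow> (nat \<Rightarrow> 'w set set) \<Rightarrow> nat
     \<Rightarrow> (('w \<Rightarrow> real) \<times> ('w \<Rightarrow> real)) set" where
  "strat_equiv M p0 A I i =
     {(s, t). s \<in> raw_strategies M A I i \<and> t \<in> raw_strategies M A I i \<and>
              (AE \<omega> in p0. s \<omega> = t \<omega>)}"

definition strategies ::
  "'w measure \<Rightarrow> 'w measure \<Rightarrow> (nat \<Rightarrow> real set) \<Rightarrow> (nat \<Rightarrow> 'w set set) \<Rightarrow> nat
     \<Rightarrow> ('w \<Rightarrow> real) set set" where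
  "strategies M p0 A I i = raw_strategies M A I i // strat_equiv M p0 A I i"

definition conj_graph ::
  "('s set) \<Rightarrow> (nat \<Rightarrow> 's \<Rightarrow> nat \<Rightarrow> 's) \<Rightarrow> nat \<Rightarrow> nat \<Rightarrow> ('s \<times> 's) set" where
  "conj_graph St \<Psi> i j = {(s, \<Psi> i s j) | s. s \<in> St}"

text \<open>The true plays are modelled as a set W of strategy profiles
(tuples indexed by the players {1..n}); for every strategy s_i there is a play in which i
applies s_i, and in any such play the others apply what i conjectures.\<close>
definition SAV ::
  "nat \<Rightarrow> (nat \<Rightarrow> 's set) \<Rightarrow> (nat \<Rightarrow> 's \<Rightarrow> nat \<Rightarrow> 's) \<Rightarrow> (nat \<Rightarrow> 's) set \<Rightarrow> bool" where
  "SAV n Str \<Psi> W \<longleftrightarrow>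
     (\<forall>i\<in>{1..n}. \<forall>s\<in>Str i. \<forall>w\<in>W. w i = s \<longrightarrow>
        (\<forall>j\<in>{1..n}. j \<noteq> i \<longrightarrow> \<Psi> i s j = w j))"

end

theory Submission
  imports Defs
begin

text \<open>Under strategic certainty both conjectures are read off one and the same play: in a
play where player i applies s, player j applies \<Psi> i s j, and player j, being certain about
i's response, conjectures exactly s. So \<Psi> j (\<Psi> i \<cdot> j) i is the identity on the strategies
of i, and graphs of mutually inverse maps are transposes of each other.\<close>

lemma SAV_conjecture_involutive:
  assumes "SAV n Str \<Psi> W"
    and "W \<subseteq> PiE {1..n} Str"
    and "\<forall>i\<in>{1..n}. \<forall>s\<in>Str i. \<exists>w\<in>W. w i = s"
    and i: "i \<in> {1..n}" and j: "j \<in> {1..n}" and "i \<noteq> j"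
    and s: "s \<in> Str i"
  shows "\<Psi> j (\<Psi> i s j) i = s"
proof -
  obtain w where w: "w \<in> W" "w i = s" using assms(3) i s by blast
  have sav: "\<And>k t. k \<in> {1..n} \<Longrightarrow> t \<in> Str k \<Longrightarrow> w k = t \<Longrightarrow>
      \<forall>l\<in>{1..n}. l \<noteq> k \<longrightarrow> \<Psi> k t l = w l"
    using assms(1) w(1) unfolding SAV_def by blast
  have "w j \<in> Str j" using assms(2) w(1) j by (blast dest: PiE_mem)
  then have "\<Psi> j (w j) i = w i" using sav[OF j _ refl] i \<open>i \<noteq> j\<close> by simp
  moreover have "\<Psi> i s j = w j" using sav[OF i s w(2)] j \<open>i \<noteq> j\<close> by simp
  ultimately show ?thesis using w(2) by simp
qed

lemma conj_graph_eq_converse: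
  assumes "\<forall>s\<in>S. \<Psi> i s j \<in> T" and "\<forall>t\<in>T. \<Psi> j t i \<in> S"
    and "\<forall>s\<in>S. \<Psi> j (\<Psi> i s j) i = s" and "\<forall>t\<in>T. \<Psi> i (\<Psi> j t i) j = t"
  shows "conj_graph S \<Psi> i j = {(s, t). (t, s) \<in> conj_graph T \<Psi> j i}"
  using assms unfolding conj_graph_def by (auto; metis)

theorem proposition1:
  fixes n :: nat
    and M :: "'w measure"
    and p :: "nat \<Rightarrow> 'w measure"
    and A :: "nat \<Rightarrow> real set"
    and I :: "nat \<Rightarrow> 'w set set"
    and \<Psi> :: "nat \<Rightarrow> ('w \<Rightarrow> real) set \<Rightarrow> nat \<Rightarrow> ('w \<Rightarrow> real) set"
    and W :: "(nat \<Rightarrow> ('w \<Rightarrow> real) set) set"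
  defines "Str \<equiv> strategies M (p 1) A I"
  assumes n2: "n \<ge> 2"
    and priors: "\<forall>i\<in>{1..n}. prob_space (p i) \<and> sets (p i) = sets M"
    and equiv_priors: "\<forall>i\<in>{1..n}. \<forall>j\<in>{1..n}. null_sets (p i) = null_sets (p j)"
    and actions: "\<forall>i\<in>{1..n}. \<exists>a\<in>A i. \<exists>b\<in>A i. a \<noteq> b"
    and partitions: "\<forall>i\<in>{1..n}. is_finite_partition (space M) (I i) \<and> I i \<subseteq> sets M"
    and conj_wt: "\<forall>i\<in>{1..n}. \<forall>j\<in>{1..n}. j \<noteq> i \<longrightarrow> (\<forall>s\<in>Str i. \<Psi> i s j \<in> Str j)"
    and plays: "W \<subseteq> PiE {1..n} Str"
    and any_strategy: "\<forall>i\<in>{1..n}. \<forall>s\<in>Str i. \<exists>w\<in>W. w i = s"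
    and sav: "SAV n Str \<Psi> W"
  shows "\<forall>i\<in>{1..n}. \<forall>j\<in>{1..n}. i \<noteq> j \<longrightarrow>
           conj_graph (Str i) \<Psi> i j = {(si, sj). (sj, si) \<in> conj_graph (Str j) \<Psi> j i}
         \<and> (\<forall>si\<in>Str i. \<Psi> j (\<Psi> i si j) i = si)
         \<and> (\<forall>sj\<in>Str j. \<Psi> i (\<Psi> j sj i) j = sj)"
proof (intro ballI impI)
  fix i j assume i: "i \<in> {1..n}" and j: "j \<in> {1..n}" and "i \<noteq> j"
  have inv_i: "\<forall>si\<in>Str i. \<Psi> j (\<Psi> i si j) i = si"
    using SAV_conjecture_involutive[OF sav plays any_strategy i j \<open>i \<noteq> j\<close>] by blast
  have inv_j: "\<forall>sj\<in>Str j. \<Psi> i (\<Psi> j sj i) j = sj"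
    using SAV_conjecture_involutive[OF sav plays any_strategy j i] \<open>i \<noteq> j\<close> by blast
  have "conj_graph (Str i) \<Psi> i j = {(si, sj). (sj, si) \<in> conj_graph (Str j) \<Psi> j i}"
    using conj_wt i j \<open>i \<noteq> j\<close> inv_i inv_j by (intro conj_graph_eq_converse) auto
  with inv_i inv_j show "conj_graph (Str i) \<Psi> i j = {(si, sj). (sj, si) \<in> conj_graph (Str j) \<Psi> j i}
         \<and> (\<forall>si\<in>Str i. \<Psi> j (\<Psi> i si j) i = si)
         \<and> (\<forall>sj\<in>Str j. \<Psi> i (\<Psi> j sj i) j = sj)" by blast
qed

end
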